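(* There are no rational numbers (in particular, no integers) $x_1,x_2,x_3,d_1,d_2,d_3,L$ such that $\operatorname{rank}N\le 2$, $\operatorname{rank}N_1=1$, $\operatorname{rank}N_2=2$, and $\tilde p_1=\tilde p_2=\dots=\tilde p_8=0$. Likewise there are no such rational numbers with $\operatorname{rank}N\le 2$, $\operatorname{rank}N_1=1$, $\operatorname{rank}N_2=2$ satisfying $p_0=p_1=p_2=p_3=0$.
   Context: Define $p_0=x_1^2+x_2^2+x_3^2-L^2$, $p_1=x_2^2+x_3^2-d_1^2$, $p_2=x_3^2+x_1^2-d_2^2$, $p_3=x_1^2+x_2^2-d_3^2$, and $\tilde p_1=p_0$, $\tilde p_2=p_1+p_2+p_3$, $\tilde p_3=d_1p_1+d_2p_2+d_3p_3$, $\tilde p_4=x_1p_1+x_2p_2+x_3p_3$, $\tilde p_5=x_1d_1p_1+x_2d_2p_2+x_3d_3p_3$, $\tilde p_6=x_1^2p_1+x_2^2p_2+x_3^2p_3$, $\tilde p_7=d_1^2p_1+d_2^2p_2+d_3^2p_3$, $\tilde p_8=x_1^2d_1^2p_1+x_2^2d_2^2p_2+x_3^2d_3^2p_3$. $N$ is the $3\times 7$ matrix whose $i$-th row is $(1,\ d_i,\ x_i,\ x_id_i,\ x_i^2,\ d_i^2,\ x_i^2d_i^2)$; $N_1$ is the $3\times 2$ matrix with rows $(1,d_i)$; $N_2$ is the $3\times 2$ matrix with rows $(1,x_i)$, $i=1,2,3$. Ranks are over $\mathbb{Q}$. *)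

theory Defs
  imports Jordan_Normal_Form.DL_Rank
begin

abbreviation rank_Q :: "rat mat \<Rightarrow> nat" where
  "rank_Q A \<equiv> vec_space.rank (dim_row A) A"

definition N_mat :: "rat \<Rightarrow> rat \<Rightarrow> rat \<Rightarrow> rat \<Rightarrow> rat \<Rightarrow> rat \<Rightarrow> rat mat" where
  "N_mat x1 x2 x3 d1 d2 d3 = mat_of_rows_list 7
     [[1, d1, x1, x1*d1, x1^2, d1^2, x1^2*d1^2],
      [1, d2, x2, x2*d2, x2^2, d2^2, x2^2*d2^2],
      [1, d3, x3, x3*d3, x3^2, d3^2, x3^2*d3^2]]"

definition N1_mat :: "rat \<Rightarrow> rat \<Rightarrow> rat \<Rightarrow> rat mat" where
  "N1_mat d1 d2 d3 = mat_of_rows_list 2 [[1, d1], [1, d2], [1, d3]]"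

definition N2_mat :: "rat \<Rightarrow> rat \<Rightarrow> rat \<Rightarrow> rat mat" where
  "N2_mat x1 x2 x3 = mat_of_rows_list 2 [[1, x1], [1, x2], [1, x3]]"

definition p0 :: "rat \<Rightarrow> rat \<Rightarrow> rat \<Rightarrow> rat \<Rightarrow> rat" where
  "p0 x1 x2 x3 L = x1^2 + x2^2 + x3^2 - L^2"
definition p1 :: "rat \<Rightarrow> rat \<Rightarrow> rat \<Rightarrow> rat" where
  "p1 x2 x3 d1 = x2^2 + x3^2 - d1^2"
definition p2 :: "rat \<Rightarrow> rat \<Rightarrow> rat \<Rightarrow> rat" where
  "p2 x3 x1 d2 = x3^2 + x1^2 - d2^2"
definition p3 :: "rat \<Rightarrow> rat \<Rightarrow> rat \<Rightarrow> rat" where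
  "p3 x1 x2 d3 = x1^2 + x2^2 - d3^2"

definition ptilde_all_zero :: "rat \<Rightarrow> rat \<Rightarrow> rat \<Rightarrow> rat \<Rightarrow> rat \<Rightarrow> rat \<Rightarrow> rat \<Rightarrow> bool" where
  "ptilde_all_zero x1 x2 x3 d1 d2 d3 L \<longleftrightarrow>
    (let q1 = p1 x2 x3 d1; q2 = p2 x3 x1 d2; q3 = p3 x1 x2 d3 in
       p0 x1 x2 x3 L = 0 \<and>
       q1 + q2 + q3 = 0 \<and>
       d1*q1 + d2*q2 + d3*q3 = 0 \<and>
       x1*q1 + x2*q2 + x3*q3 = 0 \<and>
       x1*d1*q1 + x2*d2*q2 + x3*d3*q3 = 0 \<and>
       x1^2*q1 + x2^2*q2 + x3^2*q3 = 0 \<and>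
       d1^2*q1 + d2^2*q2 + d3^2*q3 = 0 \<and>
       x1^2*d1^2*q1 + x2^2*d2^2*q2 + x3^2*d3^2*q3 = 0)"

end

theory Submission imports Defs "HOL-Computational_Algebra.Primes" begin

(* Only the rank conditions on N1 and N2 matter.  Both are 3x2 matrices
   whose rows have the form (1, a_i); such a matrix has rank 2 exactly when the a_i are
   not all equal.  Hence rank N1 = 1 forces d1 = d2 = d3 =: d, and rank N2 = 2 forces the
   x_i not to be all equal.
   With a common d, the quantities q_i = p_i satisfy q_i = c - x_i^2 for one constant c,
   so q1^2 + q2^2 + q3^2 = c * tilde p_2 - tilde p_6; vanishing of the tilde p's thus gives
   p1 = p2 = p3 = 0, which reduces the first claim to the second.
   Finally p1 = p2 = p3 = 0 gives x1^2 = x2^2 = x3^2, and p0 = 0 gives L^2 = 3 x1^2; since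
   sqrt 3 is irrational, all x_i vanish, contradicting rank N2 = 2.
   The file first treats the rank of the matrices (1, a_i), then the arithmetic facts
   (irrationality, the sum-of-squares identity), and derives the theorem at the end. *)

definition affine_mat :: "rat \<Rightarrow> rat \<Rightarrow> rat \<Rightarrow> rat mat" where
  "affine_mat a1 a2 a3 = mat_of_rows_list 2 [[1, a1], [1, a2], [1, a3]]"

lemma N1_mat_affine: "N1_mat d1 d2 d3 = affine_mat d1 d2 d3"
  unfolding N1_mat_def affine_mat_def ..

lemma N2_mat_affine: "N2_mat x1 x2 x3 = affine_mat x1 x2 x3"
  unfolding N2_mat_def affine_mat_def ..

lemma affine_mat_carrier: "affine_mat a1 a2 a3 \<in> carrier_mat 3 2"
  unfolding affine_mat_def by (auto simp: mat_of_rows_list_def)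

lemma affine_mat_entries:
  assumes "i < 3"
  shows "affine_mat a1 a2 a3 $$ (i, 0) = 1"
    and "affine_mat a1 a2 a3 $$ (i, 1) = [a1, a2, a3] ! i"
  using assms unfolding affine_mat_def
  by (auto simp: mat_of_rows_list_def less_Suc_eq numeral_3_eq_3)

text \<open>With constant second column the two columns are proportional: rank at most 1.\<close>
lemma rank_affine_mat_const: "rank_Q (affine_mat a a a) \<le> 1"
proof -
  interpret vec_space "TYPE(rat)" 3 .
  have "rank (affine_mat a a a) \<le> 1"
    by (rule rank_le_1_product_entries[OF affine_mat_carrier,
          where f = "\<lambda>_. 1" and g = "\<lambda>c. if c = 0 then 1 else a"])
       (use affine_mat_carrier[of a a a] affine_mat_entries[of _ a a a] in
         \<open>auto simp: less_Suc_eq numeral_2_eq_2 numeral_3_eq_3\<close>)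
  then show ?thesis using affine_mat_carrier[of a a a] by simp
qed

text \<open>If the a_i are not all equal, the columns (1,1,1) and (a1,a2,a3) are independent.\<close>
lemma rank_affine_mat_nonconst:
  assumes "\<not> (a1 = a2 \<and> a2 = a3)"
  shows "rank_Q (affine_mat a1 a2 a3) = 2"
proof -
  define A where "A = affine_mat a1 a2 a3"
  have car: "A \<in> carrier_mat 3 2" unfolding A_def by (rule affine_mat_carrier)
  interpret vec_space "TYPE(rat)" 3 .
  have e: "A $$ (i, 0) = 1" "A $$ (0, 1) = a1" "A $$ (1, 1) = a2" "A $$ (2, 1) = a3"
    if "i < 3" for i
    using affine_mat_entries[OF that] affine_mat_entries[of 0] affine_mat_entries[of 1]
      affine_mat_entries[of 2] unfolding A_def by auto
  have cols: "cols A = [col A 0, col A 1]" using car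
    by (auto intro!: nth_equalityI simp: less_Suc_eq numeral_2_eq_2)
  have dist: "distinct (cols A)"
  proof -
    have "col A 0 \<noteq> col A 1"
    proof
      assume "col A 0 = col A 1"
      then have "A $$ (i, 0) = A $$ (i, 1)" if "i < 3" for i
        using car that by (metis carrier_matD index_col zero_less_numeral one_less_numeral_iff semiring_norm(76))
      then have "a1 = 1" "a2 = 1" "a3 = 1" using e[of 0] e[of 1] e[of 2] by force+
      then show False using assms by simp
    qed
    then show ?thesis using cols by simp
  qed
  have "lin_indpt (set (cols A))"
  proof
    assume "lin_dep (set (cols A))"
    then obtain v where v: "v \<in> carrier_vec 2" "v \<noteq> 0\<^sub>v 2" "A *\<^sub>v v = 0\<^sub>v 3"
      using lin_depE[OF car _ dist] by blast
    have row: "(A *\<^sub>v v) $ i = v $ 0 + A $$ (i, 1) * v $ 1" if "i < 3" for i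
      using that car v(1) e(1)[OF that]
      by (auto simp: mult_mat_vec_def scalar_prod_def row_def numeral_2_eq_2)
    have eqs: "v $ 0 + a1 * v $ 1 = 0" "v $ 0 + a2 * v $ 1 = 0" "v $ 0 + a3 * v $ 1 = 0"
      using row[of 0] row[of 1] row[of 2] e[of 0] v(3) by auto
    then have "v $ 1 = 0" using assms by (metis add_left_cancel mult_cancel_right)
    moreover have "v $ 0 = 0" using eqs(1) \<open>v $ 1 = 0\<close> by simp
    ultimately have "v = 0\<^sub>v 2" using v(1)
      by (auto intro!: eq_vecI simp: less_Suc_eq numeral_2_eq_2)
    then show False using v(2) by simp
  qed
  then show ?thesis using lin_indpt_full_rank[OF car dist] car unfolding A_def by simp
qed

lemma rank_affine_mat_eq_2_iff:
  "rank_Q (affine_mat a1 a2 a3) = 2 \<longleftrightarrow> \<not> (a1 = a2 \<and> a2 = a3)"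
proof
  assume "rank_Q (affine_mat a1 a2 a3) = 2"
  then show "\<not> (a1 = a2 \<and> a2 = a3)" using rank_affine_mat_const[of a1] by auto
qed (rule rank_affine_mat_nonconst)

text \<open>The square root of a prime is irrational, phrased over the rationals.\<close>
lemma rat_square_eq_prime_times_square:
  fixes L t :: rat and p :: int
  assumes "prime p" and "L^2 = of_int p * t^2"
  shows "t = 0"
proof (rule ccontr)
  assume "t \<noteq> 0"
  obtain a b where q: "quotient_of (L / t) = (a, b)" by fastforce
  have b: "b > 0" and cop: "coprime a b" and quot: "L / t = of_int a / of_int b"
    using quotient_of_denom_pos[OF q] quotient_of_coprime[OF q] quotient_of_div[OF q] by auto
  have "(of_int a / of_int b :: rat)^2 = of_int p"
    using assms(2) \<open>t \<noteq> 0\<close> quot[symmetric] by (simp add: power_divide)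
  then have "(of_int (a^2) :: rat) = of_int (p * b^2)" using b by (simp add: power_divide field_simps)
  then have ab: "a^2 = p * b^2" by (simp only: of_int_eq_iff)
  then have "p dvd a" using assms(1) prime_dvd_power by (metis dvd_triv_left)
  then obtain c where "a = p * c" by blast
  with ab have "p * (p * c^2) = p * b^2" by (simp add: power2_eq_square ac_simps)
  then have "b^2 = p * c^2" using assms(1) by simp
  then have "p dvd b" using assms(1) prime_dvd_power by (metis dvd_triv_left)
  then show False using cop \<open>p dvd a\<close> assms(1) by (metis coprime_common_divisor not_prime_unit)
qed

text \<open>If q_i = c - y_i, then q1^2 + q2^2 + q3^2 = c (q1 + q2 + q3) - (y1 q1 + y2 q2 + y3 q3);
  so over an ordered ring the vanishing of both sums forces every q_i to vanish.\<close>
lemma shifted_weighted_sums_vanish: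
  fixes q1 q2 q3 c y1 y2 y3 :: "'a :: linordered_idom"
  assumes "q1 = c - y1" "q2 = c - y2" "q3 = c - y3"
    and "q1 + q2 + q3 = 0" and "y1 * q1 + y2 * q2 + y3 * q3 = 0"
  shows "q1 = 0 \<and> q2 = 0 \<and> q3 = 0"
proof -
  have "q1^2 + q2^2 + q3^2 = c * (q1 + q2 + q3) - (y1 * q1 + y2 * q2 + y3 * q3)"
    unfolding assms(1-3) by (simp add: power2_eq_square algebra_simps)
  then have sum: "q1^2 + q2^2 + q3^2 = 0" using assms(4,5) by simp
  have "q1^2 \<ge> 0" "q2^2 \<ge> 0" "q3^2 \<ge> 0" by simp_all
  then have "q1^2 = 0" "q2^2 = 0" "q3^2 = 0" using sum by linarith+
  then show ?thesis by simp
qed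

lemma ptilde_zero_imp_p_zero:
  assumes "ptilde_all_zero x1 x2 x3 d d d L"
  shows "p0 x1 x2 x3 L = 0 \<and> p1 x2 x3 d = 0 \<and> p2 x3 x1 d = 0 \<and> p3 x1 x2 d = 0"
proof -
  define c where "c = x1^2 + x2^2 + x3^2 - d^2"
  have "p1 x2 x3 d = 0 \<and> p2 x3 x1 d = 0 \<and> p3 x1 x2 d = 0"
  proof (rule shifted_weighted_sums_vanish[of _ c "x1^2" _ "x2^2" _ "x3^2"])
    show "p1 x2 x3 d = c - x1^2" "p2 x3 x1 d = c - x2^2" "p3 x1 x2 d = c - x3^2"
      unfolding c_def p1_def p2_def p3_def by simp_all
  qed (use assms in \<open>simp_all add: ptilde_all_zero_def Let_def\<close>)
  then show ?thesis using assms by (simp add: ptilde_all_zero_def Let_def)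
qed

text \<open>A rational point at equal distance d from the three coordinate axes and at distance L
  from the origin is the origin: otherwise L^2 = 3 x1^2 would make sqrt 3 rational.\<close>
lemma equidistant_from_axes_is_origin:
  assumes "p0 x1 x2 x3 L = 0" "p1 x2 x3 d = 0" "p2 x3 x1 d = 0" "p3 x1 x2 d = 0"
  shows "x1 = 0 \<and> x2 = 0 \<and> x3 = 0"
proof -
  have sq: "x1^2 = x2^2" "x2^2 = x3^2"
    using assms(2-4) by (auto simp: p1_def p2_def p3_def algebra_simps)
  have "L^2 = of_int 3 * x1^2" using assms(1) sq by (simp add: p0_def)
  then have "x1 = 0" by (rule rat_square_eq_prime_times_square[rotated]) simp
  then show ?thesis using sq by simp
qed

lemma no_configuration:
  assumes "rank_Q (N1_mat d1 d2 d3) = 1" "rank_Q (N2_mat x1 x2 x3) = 2"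
    and "ptilde_all_zero x1 x2 x3 d1 d2 d3 L \<or>
         (p0 x1 x2 x3 L = 0 \<and> p1 x2 x3 d1 = 0 \<and> p2 x3 x1 d2 = 0 \<and> p3 x1 x2 d3 = 0)"
  shows False
proof -
  have d: "d2 = d1" "d3 = d1"
    using assms(1) rank_affine_mat_eq_2_iff[of d1 d2 d3] by (auto simp: N1_mat_affine)
  have "p0 x1 x2 x3 L = 0 \<and> p1 x2 x3 d1 = 0 \<and> p2 x3 x1 d1 = 0 \<and> p3 x1 x2 d1 = 0"
    using assms(3) ptilde_zero_imp_p_zero[of x1 x2 x3 d1 L] unfolding d by blast
  then have "x1 = 0 \<and> x2 = 0 \<and> x3 = 0" using equidistant_from_axes_is_origin by blast
  then show False using assms(2) by (simp add: N2_mat_affine rank_affine_mat_eq_2_iff)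
qed

theorem theorem5p2:
  shows "\<not> (\<exists>x1 x2 x3 d1 d2 d3 L :: rat.
            rank_Q (N_mat x1 x2 x3 d1 d2 d3) \<le> 2 \<and>
            rank_Q (N1_mat d1 d2 d3) = 1 \<and>
            rank_Q (N2_mat x1 x2 x3) = 2 \<and>
            ptilde_all_zero x1 x2 x3 d1 d2 d3 L)
       \<and> \<not> (\<exists>x1 x2 x3 d1 d2 d3 L :: rat.
            rank_Q (N_mat x1 x2 x3 d1 d2 d3) \<le> 2 \<and>
            rank_Q (N1_mat d1 d2 d3) = 1 \<and>
            rank_Q (N2_mat x1 x2 x3) = 2 \<and>
            p0 x1 x2 x3 L = 0 \<and> p1 x2 x3 d1 = 0 \<and> p2 x3 x1 d2 = 0 \<and> p3 x1 x2 d3 = 0)"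
  using no_configuration by blast

end
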